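(* Let $\mathbf{S}=\mathbf{V}\boldsymbol{\Lambda}\mathbf{V}^{\mathsf{H}}$ and $\mathbf{E}=\mathbf{U}\mathbf{M}\mathbf{U}^{\mathsf{H}}$ be $N\times N$ matrices, with $\mathbf{V}=[\mathbf{v}_1,\dots,\mathbf{v}_N]$ and $\mathbf{U}$ unitary, $\boldsymbol{\Lambda}$ diagonal and $\mathbf{M}=\mathrm{diag}(m_1,\dots,m_N)$ diagonal, such that $\|\mathbf{E}\|\le\varepsilon$. Then there is a matrix $\mathbf{E}_U$ with $\|\mathbf{E}_U\|\le\varepsilon\delta$, where $\delta=(\|\mathbf{U}-\mathbf{V}\|+1)^2-1$, such that for every eigenvector $\mathbf{v}_i$ of $\mathbf{S}$, $$\mathbf{E}\mathbf{v}_i=m_i\mathbf{v}_i+\mathbf{E}_U\mathbf{v}_i.$$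
   Context: $\|\cdot\|$ denotes the spectral (operator) norm. *)

theory Defs
  imports "HOL-Analysis.Analysis"
begin

definition adjoint_mat :: "complex^'n^'m \<Rightarrow> complex^'m^'n" where
  "adjoint_mat A = (\<chi> i j. cnj (A $ j $ i))"

definition unitary_mat :: "complex^'n^'n \<Rightarrow> bool" where
  "unitary_mat U \<longleftrightarrow> U ** adjoint_mat U = mat 1 \<and> adjoint_mat U ** U = mat 1"

definition diagonal_mat :: "complex^'n^'n \<Rightarrow> bool" where
  "diagonal_mat A \<longleftrightarrow> (\<forall>i j. i \<noteq> j \<longrightarrow> A $ i $ j = 0)"

definition spec_norm :: "complex^'n^'m \<Rightarrow> real" where
  "spec_norm A = onorm (\<lambda>x. A *v x)"

end

theory Submission imports Defs begin

text \<open>Writing \<open>U = V + D\<close>, the difference \<open>U M U\<^sup>H - V M V\<^sup>H\<close> expands to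
  \<open>D M V\<^sup>H + V M D\<^sup>H + D M D\<^sup>H\<close>, whose norm is at most \<open>\<parallel>M\<parallel> (2\<parallel>D\<parallel> + \<parallel>D\<parallel>\<^sup>2)\<close>;
  and \<open>\<parallel>M\<parallel> = \<parallel>E\<parallel> \<le> \<epsilon>\<close> since \<open>U\<close> is unitary. So \<open>E\<^sub>U = E - V M V\<^sup>H\<close> works, because
  \<open>V M V\<^sup>H\<close> maps the column \<open>v\<^sub>i\<close> of the unitary \<open>V\<close> to \<open>m\<^sub>i v\<^sub>i\<close>.\<close>

lemma adjoint_mat_adjoint_mat [simp]: "adjoint_mat (adjoint_mat A) = A"
  by (simp add: adjoint_mat_def vec_eq_iff)

lemma adjoint_mat_add: "adjoint_mat (A + B) = adjoint_mat A + adjoint_mat (B::complex^'n^'m)"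
  by (simp add: adjoint_mat_def vec_eq_iff)

lemma unitary_mat_adjoint_mat: "unitary_mat U \<Longrightarrow> unitary_mat (adjoint_mat U)"
  by (auto simp: unitary_mat_def)

lemma inner_complex_eq_Re_cnj: "inner (z::complex) w = Re (cnj z * w)"
  by (simp add: inner_complex_def)

lemma inner_matrix_vector_mult_adjoint:
  fixes A :: "complex^'n^'m"
  shows "inner (A *v x) y = inner x (adjoint_mat A *v y)"
proof -
  have "inner (A *v x) y = Re (\<Sum>i\<in>UNIV. \<Sum>j\<in>UNIV. cnj (A$i$j) * cnj (x$j) * y$i)"
    by (simp add: inner_vec_def matrix_vector_mult_def inner_complex_eq_Re_cnj Re_sum sum_distrib_right)
  also have "\<dots> = Re (\<Sum>j\<in>UNIV. \<Sum>i\<in>UNIV. cnj (A$i$j) * cnj (x$j) * y$i)"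
    by (subst sum.swap) rule
  also have "\<dots> = inner x (adjoint_mat A *v y)"
    by (simp add: inner_vec_def matrix_vector_mult_def inner_complex_eq_Re_cnj Re_sum
        sum_distrib_left adjoint_mat_def mult_ac)
  finally show ?thesis .
qed

lemma matrix_add_rdistrib: "((A::complex^'n^'m) + B) ** (C::complex^'k^'n) = A ** C + B ** C"
  by (vector matrix_matrix_mult_def sum.distrib[symmetric] field_simps)

lemma matrix_vector_mult_smult: "(A::complex^'n^'m) *v (c *s x) = c *s (A *v x)"
  by (simp add: matrix_vector_mult_def vec_eq_iff sum_distrib_left mult_ac)

lemma matrix_vector_mult_column: "A *v column i B = column i (A ** B)"
  by (simp add: column_def matrix_matrix_mult_def matrix_vector_mult_def vec_eq_iff)

lemma diagonal_mat_mult_column_mat_1: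
  "diagonal_mat M \<Longrightarrow> M *v column i (mat 1) = (M $ i $ i) *s column i (mat 1)"
  unfolding diagonal_mat_def column_def matrix_vector_mult_def mat_def
  by (auto simp: vec_eq_iff if_distrib cong: if_cong)

lemma spec_norm_nonneg: "0 \<le> spec_norm A"
  unfolding spec_norm_def by (rule onorm_pos_le) simp

lemma norm_matrix_vector_mult_le: "norm (A *v x) \<le> spec_norm A * norm x"
  unfolding spec_norm_def by (rule onorm) simp

lemma spec_norm_le:
  "0 \<le> b \<Longrightarrow> (\<And>x. norm (A *v x) \<le> b * norm x) \<Longrightarrow> spec_norm (A::complex^'n^'m) \<le> b"
  unfolding spec_norm_def by (rule onorm_bound)

lemma spec_norm_mult_le:
  "spec_norm ((A::complex^'n^'m) ** (B::complex^'k^'n)) \<le> spec_norm A * spec_norm B"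
proof (rule spec_norm_le)
  show "0 \<le> spec_norm A * spec_norm B" by (simp add: spec_norm_nonneg)
  fix x
  have "norm ((A ** B) *v x) = norm (A *v (B *v x))" by (simp add: matrix_vector_mul_assoc)
  also have "\<dots> \<le> spec_norm A * norm (B *v x)" by (rule norm_matrix_vector_mult_le)
  also have "\<dots> \<le> spec_norm A * (spec_norm B * norm x)"
    by (rule mult_left_mono[OF norm_matrix_vector_mult_le spec_norm_nonneg])
  finally show "norm ((A ** B) *v x) \<le> spec_norm A * spec_norm B * norm x" by (simp add: mult_ac)
qed

lemma spec_norm_mult3_le:
  fixes A :: "complex^'n^'m" and B :: "complex^'k^'n" and C :: "complex^'l^'k"
  shows "spec_norm (A ** B ** C) \<le> spec_norm A * spec_norm B * spec_norm C"
  using spec_norm_mult_le[of "A ** B" C] spec_norm_mult_le[of A B]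
  by (meson mult_right_mono order_trans spec_norm_nonneg)

lemma spec_norm_add_le: "spec_norm ((A::complex^'n^'m) + B) \<le> spec_norm A + spec_norm B"
proof (rule spec_norm_le)
  show "0 \<le> spec_norm A + spec_norm B" by (simp add: spec_norm_nonneg)
  fix x
  have "norm ((A + B) *v x) \<le> norm (A *v x) + norm (B *v x)"
    by (simp add: matrix_vector_mult_add_rdistrib norm_triangle_ineq)
  also have "\<dots> \<le> (spec_norm A + spec_norm B) * norm x"
    using norm_matrix_vector_mult_le[of A x] norm_matrix_vector_mult_le[of B x]
    by (simp add: distrib_right)
  finally show "norm ((A + B) *v x) \<le> (spec_norm A + spec_norm B) * norm x" .
qed

lemma spec_norm_adjoint_le: "spec_norm (adjoint_mat (A::complex^'n^'m)) \<le> spec_norm A"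
proof (rule spec_norm_le)
  show "0 \<le> spec_norm A" by (simp add: spec_norm_nonneg)
  fix x
  let ?y = "adjoint_mat A *v x"
  have "(norm ?y)\<^sup>2 = inner (A *v ?y) x"
    by (simp add: dot_square_norm [symmetric] inner_matrix_vector_mult_adjoint)
  also have "\<dots> \<le> norm (A *v ?y) * norm x" by (rule norm_cauchy_schwarz)
  also have "\<dots> \<le> spec_norm A * norm ?y * norm x"
    by (rule mult_right_mono[OF norm_matrix_vector_mult_le]) simp
  finally have "norm ?y * norm ?y \<le> (spec_norm A * norm x) * norm ?y"
    by (simp add: power2_eq_square mult_ac)
  then show "norm ?y \<le> spec_norm A * norm x"
    by (cases "norm ?y = 0") (auto simp: spec_norm_nonneg)
qed

lemma spec_norm_unitary_le:
  assumes "unitary_mat (U::complex^'n^'n)"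
  shows "spec_norm U \<le> 1"
proof (rule spec_norm_le)
  fix x
  have "(norm (U *v x))\<^sup>2 = inner x x"
    using assms by (simp add: dot_square_norm [symmetric] inner_matrix_vector_mult_adjoint
        matrix_vector_mul_assoc unitary_mat_def)
  then show "norm (U *v x) \<le> 1 * norm x" by (simp add: dot_square_norm)
qed simp

lemma spec_norm_le_unitary_conj:
  fixes U M :: "complex^'n^'n"
  assumes "unitary_mat U"
  shows "spec_norm M \<le> spec_norm (U ** M ** adjoint_mat U)"
proof -
  have "adjoint_mat U ** (U ** M ** adjoint_mat U) ** U
      = (adjoint_mat U ** U) ** M ** (adjoint_mat U ** U)"
    by (simp add: matrix_mul_assoc)
  then have "M = adjoint_mat U ** (U ** M ** adjoint_mat U) ** U"
    using assms by (simp add: unitary_mat_def)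
  also have "spec_norm \<dots> \<le> spec_norm (adjoint_mat U) * spec_norm (U ** M ** adjoint_mat U) * spec_norm U"
    by (rule spec_norm_mult3_le)
  also have "\<dots> \<le> 1 * spec_norm (U ** M ** adjoint_mat U) * 1"
    using assms unitary_mat_adjoint_mat
    by (intro mult_mono spec_norm_unitary_le) (auto simp: spec_norm_nonneg)
  finally show ?thesis by simp
qed

lemma conj_diff_eq:
  fixes U V M :: "complex^'n^'n"
  defines "D \<equiv> U - V"
  shows "U ** M ** adjoint_mat U - V ** M ** adjoint_mat V
    = D ** M ** adjoint_mat V + V ** M ** adjoint_mat D + D ** M ** adjoint_mat D"
proof -
  have "U = V + D" by (simp add: D_def)
  then show ?thesis
    by (simp add: adjoint_mat_add matrix_add_ldistrib matrix_add_rdistrib)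
qed

lemma spec_norm_conj_diff_le:
  fixes U V M :: "complex^'n^'n"
  assumes "spec_norm V \<le> 1"
  shows "spec_norm (U ** M ** adjoint_mat U - V ** M ** adjoint_mat V)
    \<le> spec_norm M * ((spec_norm (U - V) + 1)\<^sup>2 - 1)"
proof -
  define D where "D = U - V"
  let ?d = "spec_norm D" and ?m = "spec_norm M"
  have V': "spec_norm (adjoint_mat V) \<le> 1"
    using spec_norm_adjoint_le[of V] assms by simp
  have D': "spec_norm (adjoint_mat D) \<le> ?d" by (rule spec_norm_adjoint_le)
  have DMV: "spec_norm (D ** M ** adjoint_mat V) \<le> ?d * ?m"
    using order_trans[OF spec_norm_mult3_le mult_left_mono[OF V']]
    by (simp add: spec_norm_nonneg)
  have VMD: "spec_norm (V ** M ** adjoint_mat D) \<le> ?m * ?d"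
    using order_trans[OF spec_norm_mult3_le mult_mono[OF mult_right_mono[OF assms] D']]
    by (simp add: spec_norm_nonneg)
  have DMD: "spec_norm (D ** M ** adjoint_mat D) \<le> ?d * ?m * ?d"
    using order_trans[OF spec_norm_mult3_le mult_left_mono[OF D']]
    by (simp add: spec_norm_nonneg)
  have "spec_norm (D ** M ** adjoint_mat V + V ** M ** adjoint_mat D + D ** M ** adjoint_mat D)
      \<le> spec_norm (D ** M ** adjoint_mat V) + spec_norm (V ** M ** adjoint_mat D)
        + spec_norm (D ** M ** adjoint_mat D)"
    by (meson add_right_mono order_trans spec_norm_add_le)
  also have "\<dots> \<le> ?m * ((?d + 1)\<^sup>2 - 1)"
    using DMV VMD DMD by (simp add: power2_eq_square algebra_simps)
  finally show ?thesis by (simp add: conj_diff_eq D_def)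
qed

lemma unitary_diagonal_conj_column:
  fixes V M :: "complex^'n^'n"
  assumes "unitary_mat V" and "diagonal_mat M"
  shows "(V ** M ** adjoint_mat V) *v column i V = (M $ i $ i) *s column i V"
proof -
  have "(V ** M ** adjoint_mat V) *v column i V = V *v (M *v column i (adjoint_mat V ** V))"
    by (simp add: matrix_vector_mul_assoc matrix_mul_assoc matrix_vector_mult_column)
  also have "\<dots> = V *v ((M $ i $ i) *s column i (mat 1))"
    using assms by (simp add: unitary_mat_def diagonal_mat_mult_column_mat_1)
  also have "\<dots> = (M $ i $ i) *s column i V"
    by (simp add: matrix_vector_mult_smult matrix_vector_mult_column)
  finally show ?thesis .
qed

theorem lemma1:
  fixes S E V U \<Lambda> M :: "complex^'n^'n" and \<epsilon> :: real
  assumes "S = V ** \<Lambda> ** adjoint_mat V"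
    and "E = U ** M ** adjoint_mat U"
    and "unitary_mat V" and "unitary_mat U"
    and "diagonal_mat \<Lambda>" and "diagonal_mat M"
    and "spec_norm E \<le> \<epsilon>"
  shows "\<exists>E\<^sub>U :: complex^'n^'n.
           spec_norm E\<^sub>U \<le> \<epsilon> * ((spec_norm (U - V) + 1)\<^sup>2 - 1) \<and>
           (\<forall>i. E *v column i V = (M $ i $ i) *s column i V + E\<^sub>U *v column i V)"
proof (intro exI conjI allI)
  let ?E\<^sub>U = "E - V ** M ** adjoint_mat V"
  have "spec_norm M \<le> \<epsilon>"
    using spec_norm_le_unitary_conj[OF assms(4), of M] assms(2,7) by simp
  moreover have "0 \<le> (spec_norm (U - V) + 1)\<^sup>2 - 1"
    using spec_norm_nonneg[of "U - V"] by (simp add: one_le_power)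
  ultimately have "spec_norm M * ((spec_norm (U - V) + 1)\<^sup>2 - 1)
      \<le> \<epsilon> * ((spec_norm (U - V) + 1)\<^sup>2 - 1)"
    by (rule mult_right_mono)
  then show "spec_norm ?E\<^sub>U \<le> \<epsilon> * ((spec_norm (U - V) + 1)\<^sup>2 - 1)"
    using spec_norm_conj_diff_le[OF spec_norm_unitary_le[OF assms(3)], of U M] assms(2)
    by simp
  fix i
  show "E *v column i V = (M $ i $ i) *s column i V + ?E\<^sub>U *v column i V"
    using unitary_diagonal_conj_column[OF assms(3,6)]
    by (simp add: matrix_vector_mult_diff_rdistrib)
qed

end
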